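(* Let $r>0$ and suppose $d_{jk}-\theta_{jk}=\varepsilon_{jk}/\sqrt n$, where $\varepsilon_{jk}$ has density $(1-\lambda_j)(\sigma\sqrt{2\pi})^{-1}e^{-x^2/(2\sigma^2)}+\lambda_j\mu(x)$ with $\lambda_j\in[0,1]$, $\lambda_j=0$ for $j\le J_0$, and $\mu$ a symmetric density with $\int x^2\mu=\sigma^2$ and finite fourth moment. Then, as $n\to\infty$, uniformly in $j,k$: (i) $E(d_{jk}-\theta_{jk})^{2i}=O(n^{-i})$ for $i=1,2$; (ii) for every $a>0$ and $j<J_0$, $P(\sqrt n|d_{jk}-\theta_{jk}|>a\sqrt{\ln n})=o(n^{-a^2/(2\sigma^2)})$; (iii) $E[(d_{jk}-\theta_{jk})^2I(\sqrt n|d_{jk}-\theta_{jk}|>\varrho(n))]=O(n^{-4r/(2r+1)})$.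
   Context: $\varrho_0(n)$ is the unique positive solution of $\int_{\varrho_0(n)}^\infty x^2\mu(x)dx=n^{-2r/(2r+1)}$, and $\varrho(n)=\max\big[\varrho_0(n),\ \sigma\sqrt2\sqrt{2r(2r+1)^{-1}\ln n+0.5\ln\ln n}\big]$. $I(\cdot)$ denotes the indicator function. *)

theory Defs
  imports "HOL-Probability.Probability"
begin

definition mix_density :: "real \<Rightarrow> (real \<Rightarrow> real) \<Rightarrow> real \<Rightarrow> real \<Rightarrow> real" where
  "mix_density \<sigma> \<mu> lam x =
     (1 - lam) * (1 / (\<sigma> * sqrt (2 * pi))) * exp (- (x\<^sup>2) / (2 * \<sigma>\<^sup>2)) + lam * \<mu> x"

definition rho_thr :: "(nat \<Rightarrow> real) \<Rightarrow> real \<Rightarrow> real \<Rightarrow> nat \<Rightarrow> real" where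
  "rho_thr rho0 \<sigma> r n = max (rho0 n)
     (\<sigma> * sqrt 2 * sqrt (2 * r / (2 * r + 1) * ln (real n) + 0.5 * ln (ln (real n))))"

end

theory Submission
  imports Defs "HOL-Real_Asymp.Real_Asymp"
begin

(* The noise eps_jk has density (1 - lambda_j) phi_sigma + lambda_j mu, so the expectation of a
   nonnegative function of it is a convex combination of a Gaussian integral and a mu-integral,
   which are bounded separately.
   (i) Both components have finite moments of order 2 and 4.
   (ii) For j < J0 the noise is exactly Gaussian, and the Mills-ratio bound
   P(|eps| > t) <= 2 sigma / (t sqrt(2 pi)) exp(-t^2 / (2 sigma^2)) at t = a sqrt(ln n) is
   n^(-a^2 / (2 sigma^2)) times a prefactor of order 1 / sqrt(ln n).
   (iii) On {|x| > rho} the density phi_sigma is at most sqrt(2r+1) exp(-r rho^2 / ((2r+1) sigma^2))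
   times the density of the wider N(0, (2r+1) sigma^2); as rho(n)^2 >= 2 sigma^2 (2r/(2r+1)) ln n,
   that factor is at most n^((1-2r)/(2r+1)). By symmetry of mu and rho(n) >= rho0(n), the mu-part
   is at most 2 n^(-2r/(2r+1)), which is smaller. Dividing by n gives the rate n^(-4r/(2r+1)). *)

lemma mix_density_eq:
  assumes "0 < \<sigma>"
  shows "mix_density \<sigma> \<mu> l x = (1 - l) * normal_density 0 \<sigma> x + l * \<mu> x"
  using assms by (simp add: mix_density_def normal_density_def real_sqrt_mult)

lemma (in prob_space) expectation_mixture_le:
  fixes X :: "'a \<Rightarrow> real" and f h g :: "real \<Rightarrow> real"
  assumes X: "distributed M lborel X (\<lambda>x. ennreal ((1 - l) * f x + l * h x))"
    and l: "0 \<le> l" "l \<le> 1"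
    and [measurable]: "f \<in> borel_measurable borel" "h \<in> borel_measurable borel"
      "g \<in> borel_measurable borel"
    and nonneg: "\<And>x. 0 \<le> f x" "\<And>x. 0 \<le> h x" "\<And>x. 0 \<le> g x"
    and A: "(\<integral>\<^sup>+x. ennreal (f x * g x) \<partial>lborel) \<le> ennreal A" "0 \<le> A"
    and B: "(\<integral>\<^sup>+x. ennreal (h x * g x) \<partial>lborel) \<le> ennreal B" "0 \<le> B"
  shows "expectation (\<lambda>\<omega>. g (X \<omega>)) \<le> (1 - l) * A + l * B"
proof -
  have [measurable]: "X \<in> borel_measurable M"
    using distributed_measurable[OF X] by simp
  have split: "ennreal ((1 - l) * f x + l * h x) * ennreal (g x)
      = ennreal (1 - l) * ennreal (f x * g x) + ennreal l * ennreal (h x * g x)" for x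
    using l nonneg[of x]
    by (simp add: distrib_right mult.assoc ennreal_mult'[symmetric] ennreal_mult''[symmetric]
        ennreal_plus[symmetric] del: ennreal_plus)
  have "(\<integral>\<^sup>+\<omega>. ennreal (g (X \<omega>)) \<partial>M)
      = (\<integral>\<^sup>+x. ennreal ((1 - l) * f x + l * h x) * ennreal (g x) \<partial>lborel)"
    by (rule distributed_nn_integral[OF X, symmetric]) simp
  also have "\<dots> = ennreal (1 - l) * (\<integral>\<^sup>+x. ennreal (f x * g x) \<partial>lborel)
      + ennreal l * (\<integral>\<^sup>+x. ennreal (h x * g x) \<partial>lborel)"
    unfolding split by (simp add: nn_integral_add nn_integral_cmult)
  also have "\<dots> \<le> ennreal (1 - l) * ennreal A + ennreal l * ennreal B"
    by (intro add_mono mult_left_mono A B) auto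
  also have "\<dots> = ennreal ((1 - l) * A + l * B)"
    using l A B by (simp add: ennreal_mult'[symmetric] ennreal_plus[symmetric] del: ennreal_plus)
  finally show ?thesis
    using l A B nonneg by (subst integral_eq_nn_integral) (auto intro: enn2real_leI)
qed

lemma nn_integral_symmetric_tail_le:
  fixes h :: "real \<Rightarrow> ennreal"
  assumes [measurable]: "h \<in> borel_measurable borel" and symmetric: "\<And>x. h (- x) = h x"
  shows "(\<integral>\<^sup>+x. h x * indicator {x. t < \<bar>x\<bar>} x \<partial>lborel)
    \<le> 2 * (\<integral>\<^sup>+x. h x * indicator {t..} x \<partial>lborel)"
proof -
  have reflect: "(\<integral>\<^sup>+x. h x * indicator {t..} (- x) \<partial>lborel) = (\<integral>\<^sup>+x. h x * indicator {t..} x \<partial>lborel)"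
    using nn_integral_real_affine[where f = "\<lambda>x. h x * indicator {t..} x" and c = "-1" and t = 0]
    by (simp add: symmetric)
  have "(\<integral>\<^sup>+x. h x * indicator {x. t < \<bar>x\<bar>} x \<partial>lborel)
      \<le> (\<integral>\<^sup>+x. h x * indicator {t..} x + h x * indicator {t..} (- x) \<partial>lborel)"
    by (rule nn_integral_mono) (auto simp: indicator_def)
  also have "\<dots> = 2 * (\<integral>\<^sup>+x. h x * indicator {t..} x \<partial>lborel)"
    by (simp add: nn_integral_add reflect mult_2)
  finally show ?thesis .
qed

lemma normal_density_centered:
  assumes "0 < \<sigma>"
  shows "normal_density 0 \<sigma> x = exp (- x\<^sup>2 / (2 * \<sigma>\<^sup>2)) / (\<sigma> * sqrt (2 * pi))"
  using assms by (simp add: normal_density_def real_sqrt_mult mult.commute)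

lemma nn_integral_normal_density_upper_tail_le:
  assumes sigma: "0 < \<sigma>" and t: "0 < t"
  shows "(\<integral>\<^sup>+x. ennreal (normal_density 0 \<sigma> x) * indicator {t..} x \<partial>lborel)
     \<le> ennreal (\<sigma> / (t * sqrt (2 * pi)) * exp (- t\<^sup>2 / (2 * \<sigma>\<^sup>2)))"
proof -
  define f where "f x = x / t * normal_density 0 \<sigma> x" for x
  define F where "F x = - \<sigma>\<^sup>2 / t * normal_density 0 \<sigma> x" for x
  have "(\<integral>\<^sup>+x. ennreal (normal_density 0 \<sigma> x) * indicator {t..} x \<partial>lborel)
      \<le> (\<integral>\<^sup>+x. ennreal (f x) * indicator {t..} x \<partial>lborel)"
  proof (intro nn_integral_mono)
    fix x
    have "normal_density 0 \<sigma> x \<le> x / t * normal_density 0 \<sigma> x" if "t \<le> x"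
      using mult_right_mono[of 1 "x / t" "normal_density 0 \<sigma> x"] that t by simp
    then show "ennreal (normal_density 0 \<sigma> x) * indicator {t..} x \<le> ennreal (f x) * indicator {t..} x"
      by (simp add: f_def indicator_def ennreal_leI)
  qed
  also have "\<dots> = 0 - F t"
  proof (rule nn_integral_FTC_atLeast)
    show "f \<in> borel_measurable borel"
      unfolding f_def by measurable
    show "DERIV F x :> f x" for x
      using sigma t unfolding F_def f_def normal_density_centered[OF sigma]
      by (auto intro!: derivative_eq_intros simp: field_simps power2_eq_square)
    show "0 \<le> f x" if "t \<le> x" for x
      using that t by (simp add: f_def)
    show "(F \<longlongrightarrow> 0) at_top"
      unfolding F_def normal_density_centered[OF sigma] using sigma by real_asymp
  qed
  also have "0 - F t = \<sigma> / (t * sqrt (2 * pi)) * exp (- t\<^sup>2 / (2 * \<sigma>\<^sup>2))"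
    using sigma t by (simp add: F_def normal_density_centered power2_eq_square field_simps)
  finally show ?thesis .
qed

lemma nn_integral_normal_density_abs_tail_le:
  assumes "0 < \<sigma>" "0 < t"
  shows "(\<integral>\<^sup>+x. ennreal (normal_density 0 \<sigma> x) * indicator {x. t < \<bar>x\<bar>} x \<partial>lborel)
     \<le> ennreal (2 * \<sigma> / (t * sqrt (2 * pi)) * exp (- t\<^sup>2 / (2 * \<sigma>\<^sup>2)))"
proof -
  have "(\<integral>\<^sup>+x. ennreal (normal_density 0 \<sigma> x) * indicator {x. t < \<bar>x\<bar>} x \<partial>lborel)
      \<le> 2 * (\<integral>\<^sup>+x. ennreal (normal_density 0 \<sigma> x) * indicator {t..} x \<partial>lborel)"
    by (rule nn_integral_symmetric_tail_le) (simp_all add: normal_density_def)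
  also have "\<dots> \<le> 2 * ennreal (\<sigma> / (t * sqrt (2 * pi)) * exp (- t\<^sup>2 / (2 * \<sigma>\<^sup>2)))"
    using assms by (intro mult_left_mono nn_integral_normal_density_upper_tail_le) simp_all
  also have "\<dots> = ennreal (2 * \<sigma> / (t * sqrt (2 * pi)) * exp (- t\<^sup>2 / (2 * \<sigma>\<^sup>2)))"
    using ennreal_mult'[of 2 "\<sigma> / (t * sqrt (2 * pi)) * exp (- t\<^sup>2 / (2 * \<sigma>\<^sup>2))"] by (simp add: mult.assoc)
  finally show ?thesis .
qed

lemma normal_density_rescale:
  assumes "0 < \<sigma>" "0 < s"
  shows "normal_density 0 \<sigma> x
    = s / \<sigma> * exp (- (1 / \<sigma>\<^sup>2 - 1 / s\<^sup>2) * x\<^sup>2 / 2) * normal_density 0 s x"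
proof -
  have "- x\<^sup>2 / (2 * \<sigma>\<^sup>2) = - (1 / \<sigma>\<^sup>2 - 1 / s\<^sup>2) * x\<^sup>2 / 2 + - x\<^sup>2 / (2 * s\<^sup>2)"
    using assms by (simp add: field_simps)
  then have "exp (- x\<^sup>2 / (2 * \<sigma>\<^sup>2))
      = exp (- (1 / \<sigma>\<^sup>2 - 1 / s\<^sup>2) * x\<^sup>2 / 2) * exp (- x\<^sup>2 / (2 * s\<^sup>2))"
    by (metis exp_add)
  then show ?thesis
    using assms by (simp add: normal_density_centered)
qed

lemma normal_density_truncated_le_rescaled:
  assumes sigma: "0 < \<sigma>" and s: "\<sigma> < s" and rho: "0 \<le> \<rho>"
  shows "normal_density 0 \<sigma> x * (x\<^sup>2 * indicator {x. \<rho> < \<bar>x\<bar>} x)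
    \<le> s / \<sigma> * exp (- (1 / \<sigma>\<^sup>2 - 1 / s\<^sup>2) * \<rho>\<^sup>2 / 2) * (normal_density 0 s x * x\<^sup>2)"
proof (cases "\<rho> < \<bar>x\<bar>")
  case True
  define \<gamma> where "\<gamma> = 1 / \<sigma>\<^sup>2 - 1 / s\<^sup>2"
  have "0 \<le> \<gamma>"
    using sigma s by (simp add: \<gamma>_def frac_le power_strict_mono less_imp_le)
  moreover have "\<rho>\<^sup>2 \<le> x\<^sup>2"
    using True rho by (metis abs_le_square_iff abs_of_nonneg less_imp_le)
  ultimately have "\<gamma> * \<rho>\<^sup>2 \<le> \<gamma> * x\<^sup>2"
    by (intro mult_left_mono)
  then have "exp (- \<gamma> * x\<^sup>2 / 2) \<le> exp (- \<gamma> * \<rho>\<^sup>2 / 2)"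
    by simp
  have "normal_density 0 \<sigma> x * x\<^sup>2 = s / \<sigma> * exp (- \<gamma> * x\<^sup>2 / 2) * (normal_density 0 s x * x\<^sup>2)"
    using sigma s by (simp add: normal_density_rescale[of \<sigma> s x, folded \<gamma>_def])
  also have "\<dots> \<le> s / \<sigma> * exp (- \<gamma> * \<rho>\<^sup>2 / 2) * (normal_density 0 s x * x\<^sup>2)"
    using \<open>exp (- \<gamma> * x\<^sup>2 / 2) \<le> exp (- \<gamma> * \<rho>\<^sup>2 / 2)\<close> sigma s
    by (intro mult_right_mono mult_left_mono) simp_all
  finally show ?thesis
    using True by (simp add: \<gamma>_def)
next
  case False
  then show ?thesis
    using sigma s by simp
qed

lemma nn_integral_normal_density_truncated_second_moment_le:
  assumes sigma: "0 < \<sigma>" and s: "\<sigma> < s" and rho: "0 \<le> \<rho>"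
  shows "(\<integral>\<^sup>+x. ennreal (normal_density 0 \<sigma> x * (x\<^sup>2 * indicator {x. \<rho> < \<bar>x\<bar>} x)) \<partial>lborel)
    \<le> ennreal (s ^ 3 / \<sigma> * exp (- (1 / \<sigma>\<^sup>2 - 1 / s\<^sup>2) * \<rho>\<^sup>2 / 2))"
proof -
  define c where "c = s / \<sigma> * exp (- (1 / \<sigma>\<^sup>2 - 1 / s\<^sup>2) * \<rho>\<^sup>2 / 2)"
  have "0 \<le> c"
    using sigma s by (simp add: c_def)
  have moment: "(\<integral>\<^sup>+x. ennreal (normal_density 0 s x * x\<^sup>2) \<partial>lborel) = ennreal (s\<^sup>2)"
    using sigma s integrable_normal_moment[where \<sigma> = s and \<mu> = 0 and k = 2]
      integral_normal_moment_even[where \<sigma> = s and \<mu> = 0 and k = 1]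
    by (subst nn_integral_eq_integral) (simp_all add: power2_eq_square)
  have "(\<integral>\<^sup>+x. ennreal (normal_density 0 \<sigma> x * (x\<^sup>2 * indicator {x. \<rho> < \<bar>x\<bar>} x)) \<partial>lborel)
      \<le> (\<integral>\<^sup>+x. ennreal c * ennreal (normal_density 0 s x * x\<^sup>2) \<partial>lborel)"
    using normal_density_truncated_le_rescaled[OF sigma s rho] \<open>0 \<le> c\<close>
    by (intro nn_integral_mono) (simp add: c_def ennreal_mult'[symmetric] ennreal_leI)
  also have "\<dots> = ennreal (c * s\<^sup>2)"
    using \<open>0 \<le> c\<close> by (subst nn_integral_cmult) (simp_all add: moment ennreal_mult'[symmetric])
  also have "c * s\<^sup>2 = s ^ 3 / \<sigma> * exp (- (1 / \<sigma>\<^sup>2 - 1 / s\<^sup>2) * \<rho>\<^sup>2 / 2)"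
    by (simp add: c_def power2_eq_square power3_eq_cube)
  finally show ?thesis .
qed

lemma nn_integral_symmetric_truncated_second_moment_le:
  fixes \<mu> :: "real \<Rightarrow> real"
  assumes [measurable]: "\<mu> \<in> borel_measurable borel"
    and nonneg: "\<And>x. 0 \<le> \<mu> x" and symmetric: "\<And>x. \<mu> (- x) = \<mu> x"
    and integrable: "integrable lborel (\<lambda>x. x\<^sup>2 * \<mu> x)" and "\<rho>\<^sub>0 \<le> \<rho>"
  shows "(\<integral>\<^sup>+x. ennreal (\<mu> x * (x\<^sup>2 * indicator {x. \<rho> < \<bar>x\<bar>} x)) \<partial>lborel)
     \<le> ennreal (2 * (LINT x:{\<rho>\<^sub>0..}|lborel. x\<^sup>2 * \<mu> x))"
proof -
  let ?h = "\<lambda>x. ennreal (x\<^sup>2 * \<mu> x)"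
  have "(\<integral>\<^sup>+x. ennreal (\<mu> x * (x\<^sup>2 * indicator {x. \<rho> < \<bar>x\<bar>} x)) \<partial>lborel)
      = (\<integral>\<^sup>+x. ?h x * indicator {x. \<rho> < \<bar>x\<bar>} x \<partial>lborel)"
    by (intro nn_integral_cong) (simp add: indicator_def mult.commute)
  also have "\<dots> \<le> 2 * (\<integral>\<^sup>+x. ?h x * indicator {\<rho>..} x \<partial>lborel)"
    by (rule nn_integral_symmetric_tail_le) (simp_all add: symmetric)
  also have "\<dots> \<le> 2 * (\<integral>\<^sup>+x. ?h x * indicator {\<rho>\<^sub>0..} x \<partial>lborel)"
    using \<open>\<rho>\<^sub>0 \<le> \<rho>\<close> by (intro mult_left_mono nn_integral_mono) (auto simp: indicator_def)
  also have "(\<integral>\<^sup>+x. ?h x * indicator {\<rho>\<^sub>0..} x \<partial>lborel)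
      = (\<integral>\<^sup>+x. ennreal (indicator {\<rho>\<^sub>0..} x *\<^sub>R (x\<^sup>2 * \<mu> x)) \<partial>lborel)"
    by (intro nn_integral_cong) (simp add: indicator_def)
  also have "\<dots> = ennreal (LINT x:{\<rho>\<^sub>0..}|lborel. x\<^sup>2 * \<mu> x)"
    unfolding set_lebesgue_integral_def
    by (intro nn_integral_eq_integral integrable_mult_indicator integrable) (auto simp: nonneg)
  finally show ?thesis
    by (simp add: ennreal_mult')
qed

lemma rho_thr_lower_bound:
  assumes r: "0 < r" and sigma: "0 < \<sigma>" and n: "exp 1 \<le> real n"
  shows "0 \<le> rho_thr rho0 \<sigma> r n"
    and "4 * r / (2 * r + 1) * ln (real n) \<le> (rho_thr rho0 \<sigma> r n / \<sigma>)\<^sup>2"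
proof -
  define q where "q = 2 * r / (2 * r + 1) * ln (real n) + 0.5 * ln (ln (real n))"
  have "0 < real n"
    using n exp_gt_zero[of 1] by linarith
  then have ln_n: "1 \<le> ln (real n)"
    using n by (metis ln_exp ln_le_cancel_iff exp_gt_zero)
  then have q: "2 * r / (2 * r + 1) * ln (real n) \<le> q" "0 \<le> q"
    using r by (simp_all add: q_def)
  have thr: "\<sigma> * sqrt 2 * sqrt q \<le> rho_thr rho0 \<sigma> r n"
    by (simp add: rho_thr_def q_def)
  then show "0 \<le> rho_thr rho0 \<sigma> r n"
    using sigma q by (meson order.trans mult_nonneg_nonneg real_sqrt_ge_zero less_imp_le
        zero_le_numeral)
  have "(\<sigma> * sqrt 2 * sqrt q)\<^sup>2 \<le> (rho_thr rho0 \<sigma> r n)\<^sup>2"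
    using thr sigma q by (intro power_mono) simp_all
  then have "2 * q \<le> (rho_thr rho0 \<sigma> r n / \<sigma>)\<^sup>2"
    using sigma q by (simp add: power_mult_distrib power_divide field_simps)
  then show "4 * r / (2 * r + 1) * ln (real n) \<le> (rho_thr rho0 \<sigma> r n / \<sigma>)\<^sup>2"
    using q by simp
qed

lemma exp_rho_thr_le:
  assumes r: "0 < r" and sigma: "0 < \<sigma>" and n: "exp 1 \<le> real n"
  shows "exp (- (r / (2 * r + 1)) * (rho_thr rho0 \<sigma> r n / \<sigma>)\<^sup>2)
    \<le> real n powr ((1 - 2 * r) / (2 * r + 1))"
proof -
  define \<beta> where "\<beta> = 2 * r / (2 * r + 1)"
  have "0 < real n"
    using n exp_gt_zero[of 1] by linarith
  then have ln_n: "0 \<le> ln (real n)"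
    using n by (metis ln_exp ln_le_cancel_iff exp_gt_zero zero_le_one order.trans)
  have "0 \<le> \<beta>"
    using r by (simp add: \<beta>_def)
  have "2 * \<beta> * ln (real n) \<le> (rho_thr rho0 \<sigma> r n / \<sigma>)\<^sup>2"
    using rho_thr_lower_bound(2)[OF r sigma n] r by (simp add: \<beta>_def)
  then have "\<beta> * (2 * \<beta> * ln (real n)) \<le> \<beta> * (rho_thr rho0 \<sigma> r n / \<sigma>)\<^sup>2"
    using \<open>0 \<le> \<beta>\<close> by (rule mult_left_mono)
  then have "- (\<beta> / 2) * (rho_thr rho0 \<sigma> r n / \<sigma>)\<^sup>2 \<le> - (\<beta> * \<beta>) * ln (real n)"
    by (simp add: algebra_simps)
  also have "\<dots> \<le> (1 - 2 * \<beta>) * ln (real n)"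
    using ln_n zero_le_square[of "1 - \<beta>"] by (intro mult_right_mono) (simp_all add: algebra_simps)
  finally have "exp (- (\<beta> / 2) * (rho_thr rho0 \<sigma> r n / \<sigma>)\<^sup>2) \<le> real n powr (1 - 2 * \<beta>)"
    using \<open>0 < real n\<close> by (simp add: powr_def)
  moreover have "\<beta> / 2 = r / (2 * r + 1)" "1 - 2 * \<beta> = (1 - 2 * r) / (2 * r + 1)"
    using r by (simp_all add: \<beta>_def field_simps)
  ultimately show ?thesis
    by simp
qed

locale normal_mixture_noise = prob_space M
  for M :: "'a measure" and \<sigma> :: real and \<mu> :: "real \<Rightarrow> real" and lam :: "nat \<Rightarrow> real"
    and eps :: "nat \<Rightarrow> nat \<Rightarrow> 'a \<Rightarrow> real" +
  assumes sigma_pos: "0 < \<sigma>"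
    and mu_measurable [measurable]: "\<mu> \<in> borel_measurable borel"
    and mu_nonneg: "\<And>x. 0 \<le> \<mu> x"
    and mu_symmetric: "\<And>x. \<mu> (- x) = \<mu> x"
    and lam_nonneg: "\<And>j. 0 \<le> lam j" and lam_le_1: "\<And>j. lam j \<le> 1"
    and eps_distributed:
      "\<And>j k. distributed M lborel (eps j k) (\<lambda>x. ennreal (mix_density \<sigma> \<mu> (lam j) x))"
begin

lemma eps_distributed_mixture:
  "distributed M lborel (eps j k) (\<lambda>x. ennreal ((1 - lam j) * normal_density 0 \<sigma> x + lam j * \<mu> x))"
  using eps_distributed[of j k] by (simp add: mix_density_eq[OF sigma_pos])

lemma expectation_eps_le:
  assumes "g \<in> borel_measurable borel" "\<And>x. 0 \<le> g x"
    and "(\<integral>\<^sup>+x. ennreal (normal_density 0 \<sigma> x * g x) \<partial>lborel) \<le> ennreal A" "0 \<le> A"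
    and "(\<integral>\<^sup>+x. ennreal (\<mu> x * g x) \<partial>lborel) \<le> ennreal B" "0 \<le> B"
  shows "expectation (\<lambda>\<omega>. g (eps j k \<omega>)) \<le> (1 - lam j) * A + lam j * B"
  by (rule expectation_mixture_le[OF eps_distributed_mixture lam_nonneg lam_le_1])
     (simp_all add: assms mu_nonneg)

lemma expectation_even_moment_le:
  assumes "integrable lborel (\<lambda>x. x ^ (2 * i) * \<mu> x)"
  shows "expectation (\<lambda>\<omega>. eps j k \<omega> ^ (2 * i))
    \<le> (LINT x|lborel. normal_density 0 \<sigma> x * x ^ (2 * i)) + (LINT x|lborel. x ^ (2 * i) * \<mu> x)"
    (is "_ \<le> ?G + ?U")
proof -
  have "0 \<le> ?G" "0 \<le> ?U"
    using mu_nonneg by (simp_all add: zero_le_even_power)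
  have "expectation (\<lambda>\<omega>. eps j k \<omega> ^ (2 * i)) \<le> (1 - lam j) * ?G + lam j * ?U"
  proof (rule expectation_eps_le)
    show "(\<integral>\<^sup>+x. ennreal (normal_density 0 \<sigma> x * x ^ (2 * i)) \<partial>lborel) \<le> ennreal ?G"
      using sigma_pos integrable_normal_moment[where \<sigma> = \<sigma> and \<mu> = 0 and k = "2 * i"]
      by (subst nn_integral_eq_integral) (simp_all add: zero_le_even_power)
    show "(\<integral>\<^sup>+x. ennreal (\<mu> x * x ^ (2 * i)) \<partial>lborel) \<le> ennreal ?U"
      using assms mu_nonneg
      by (subst nn_integral_eq_integral) (simp_all add: mult.commute zero_le_even_power)
  qed (simp_all add: \<open>0 \<le> ?G\<close> \<open>0 \<le> ?U\<close> zero_le_even_power)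
  also have "\<dots> \<le> ?G + ?U"
    using lam_nonneg[of j] lam_le_1[of j] \<open>0 \<le> ?G\<close> \<open>0 \<le> ?U\<close>
    by (intro add_mono mult_left_le_one_le) simp_all
  finally show ?thesis .
qed

lemma scaled_even_moment_bound:
  assumes "integrable lborel (\<lambda>x. x ^ (2 * i) * \<mu> x)"
  shows "\<exists>C. \<forall>\<^sub>F n in sequentially. \<forall>j k.
    expectation (\<lambda>\<omega>. (eps j k \<omega> / sqrt (real n)) ^ (2 * i)) \<le> C * real n powr - real i"
proof (intro exI eventually_mono[OF eventually_gt_at_top[of 0]] allI)
  fix n j k :: nat
  assume "0 < n"
  have "expectation (\<lambda>\<omega>. (eps j k \<omega> / sqrt (real n)) ^ (2 * i))
      = expectation (\<lambda>\<omega>. eps j k \<omega> ^ (2 * i)) / real n ^ i"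
    by (simp add: power_divide power_mult)
  also have "\<dots> \<le> ((LINT x|lborel. normal_density 0 \<sigma> x * x ^ (2 * i))
      + (LINT x|lborel. x ^ (2 * i) * \<mu> x)) * real n powr - real i"
    using \<open>0 < n\<close> expectation_even_moment_le[OF assms]
    by (simp add: powr_minus powr_realpow divide_inverse mult_right_mono)
  finally show "expectation (\<lambda>\<omega>. (eps j k \<omega> / sqrt (real n)) ^ (2 * i))
      \<le> ((LINT x|lborel. normal_density 0 \<sigma> x * x ^ (2 * i))
      + (LINT x|lborel. x ^ (2 * i) * \<mu> x)) * real n powr - real i" .
qed

lemma prob_abs_tail_le:
  assumes "lam j = 0" "0 < t"
  shows "prob {\<omega> \<in> space M. t < \<bar>eps j k \<omega>\<bar>}
    \<le> 2 * \<sigma> / (t * sqrt (2 * pi)) * exp (- t\<^sup>2 / (2 * \<sigma>\<^sup>2))"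
proof -
  have "distributed M lborel (eps j k) (\<lambda>x. ennreal (normal_density 0 \<sigma> x))"
    using eps_distributed_mixture[of j k] assms by simp
  then have "emeasure M {\<omega> \<in> space M. t < \<bar>eps j k \<omega>\<bar>}
      = (\<integral>\<^sup>+x. ennreal (normal_density 0 \<sigma> x) * indicator {x. t < \<bar>x\<bar>} x \<partial>lborel)"
    by (subst distributed_emeasure[symmetric]) (auto simp: vimage_def Int_def conj_commute)
  also have "\<dots> \<le> ennreal (2 * \<sigma> / (t * sqrt (2 * pi)) * exp (- t\<^sup>2 / (2 * \<sigma>\<^sup>2)))"
    using sigma_pos assms by (intro nn_integral_normal_density_abs_tail_le)
  finally show ?thesis
    using sigma_pos assms by (simp add: emeasure_eq_measure ennreal_le_iff)
qed

lemma prob_abs_tail_sqrt_ln_le: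
  assumes "lam j = 0" "0 < a" "1 < ln (real n)"
  shows "prob {\<omega> \<in> space M. a * sqrt (ln (real n)) < \<bar>eps j k \<omega>\<bar>}
    \<le> 2 * \<sigma> / (a * sqrt (2 * pi)) * (1 / sqrt (ln (real n))) * real n powr (- (a\<^sup>2 / (2 * \<sigma>\<^sup>2)))"
proof -
  let ?t = "a * sqrt (ln (real n))"
  have "0 < real n"
    using assms(3) by (cases "n = 0") auto
  have "0 < ?t"
    using assms by (intro mult_pos_pos real_sqrt_gt_zero) linarith+
  have exponent: "exp (- ?t\<^sup>2 / (2 * \<sigma>\<^sup>2)) = real n powr (- (a\<^sup>2 / (2 * \<sigma>\<^sup>2)))"
    using assms \<open>0 < real n\<close> by (simp add: power_mult_distrib powr_def)
  have prefactor: "2 * \<sigma> / (?t * sqrt (2 * pi)) = 2 * \<sigma> / (a * sqrt (2 * pi)) * (1 / sqrt (ln (real n)))"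
    by (simp add: ac_simps)
  show ?thesis
    using prob_abs_tail_le[OF \<open>lam j = 0\<close> \<open>0 < ?t\<close>] unfolding exponent prefactor .
qed

lemma scaled_tail_prob_bound:
  assumes a: "0 < a" and e: "0 < e" and gaussian: "\<And>j. P j \<Longrightarrow> lam j = 0"
  shows "\<forall>\<^sub>F n in sequentially. \<forall>j k. P j \<longrightarrow>
    prob {\<omega> \<in> space M. sqrt (real n) * \<bar>eps j k \<omega> / sqrt (real n)\<bar> > a * sqrt (ln (real n))}
      \<le> e * real n powr (- (a\<^sup>2 / (2 * \<sigma>\<^sup>2)))"
proof -
  have "(\<lambda>n::nat. 1 / sqrt (ln (real n))) \<longlonglongrightarrow> 0"
    by real_asymp
  then have "(\<lambda>n::nat. 2 * \<sigma> / (a * sqrt (2 * pi)) * (1 / sqrt (ln (real n)))) \<longlonglongrightarrow> 0"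
    by (rule tendsto_mult_right_zero)
  then have "\<forall>\<^sub>F n in sequentially. 2 * \<sigma> / (a * sqrt (2 * pi)) * (1 / sqrt (ln (real n))) < e"
    using e by (rule order_tendstoD)
  moreover have "\<forall>\<^sub>F n in sequentially. 1 < ln (real n)"
    using filterlim_compose[OF ln_at_top filterlim_real_sequentially]
    by (simp add: filterlim_at_top_dense)
  ultimately show ?thesis
  proof eventually_elim
    case (elim n)
    have "0 < real n"
      using elim(2) by (cases "n = 0") auto
    have "prob {\<omega> \<in> space M. sqrt (real n) * \<bar>eps j k \<omega> / sqrt (real n)\<bar> > a * sqrt (ln (real n))}
        \<le> e * real n powr (- (a\<^sup>2 / (2 * \<sigma>\<^sup>2)))" if "P j" for j k
    proof -
      have "prob {\<omega> \<in> space M. sqrt (real n) * \<bar>eps j k \<omega> / sqrt (real n)\<bar> > a * sqrt (ln (real n))}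
          = prob {\<omega> \<in> space M. a * sqrt (ln (real n)) < \<bar>eps j k \<omega>\<bar>}"
        using \<open>0 < real n\<close> by (simp add: abs_divide)
      also have "\<dots> \<le> 2 * \<sigma> / (a * sqrt (2 * pi)) * (1 / sqrt (ln (real n)))
          * real n powr (- (a\<^sup>2 / (2 * \<sigma>\<^sup>2)))"
        by (rule prob_abs_tail_sqrt_ln_le[OF gaussian[OF that] a elim(2)])
      also have "\<dots> \<le> e * real n powr (- (a\<^sup>2 / (2 * \<sigma>\<^sup>2)))"
        using elim(1) by (intro mult_right_mono) simp_all
      finally show ?thesis .
    qed
    then show ?case
      by blast
  qed
qed

lemma expectation_truncated_second_moment_le:
  assumes mu2: "integrable lborel (\<lambda>x. x\<^sup>2 * \<mu> x)"
    and s: "\<sigma> < s" and rho: "0 \<le> \<rho>" "\<rho>\<^sub>0 \<le> \<rho>"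
  shows "expectation (\<lambda>\<omega>. (eps j k \<omega>)\<^sup>2 * indicator {x. \<rho> < \<bar>x\<bar>} (eps j k \<omega>))
    \<le> (1 - lam j) * (s ^ 3 / \<sigma> * exp (- (1 / \<sigma>\<^sup>2 - 1 / s\<^sup>2) * \<rho>\<^sup>2 / 2))
      + lam j * (2 * (LINT x:{\<rho>\<^sub>0..}|lborel. x\<^sup>2 * \<mu> x))"
proof (rule expectation_eps_le[where g = "\<lambda>x. x\<^sup>2 * indicator {x. \<rho> < \<bar>x\<bar>} x"])
  show "(\<lambda>x. x\<^sup>2 * indicator {x. \<rho> < \<bar>x\<bar>} x :: real) \<in> borel_measurable borel"
    by measurable
  show "0 \<le> 2 * (LINT x:{\<rho>\<^sub>0..}|lborel. x\<^sup>2 * \<mu> x)"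
    unfolding set_lebesgue_integral_def
    by (simp add: Bochner_Integration.integral_nonneg mu_nonneg indicator_def)
  show "(\<integral>\<^sup>+x. ennreal (normal_density 0 \<sigma> x * (x\<^sup>2 * indicator {x. \<rho> < \<bar>x\<bar>} x)) \<partial>lborel)
    \<le> ennreal (s ^ 3 / \<sigma> * exp (- (1 / \<sigma>\<^sup>2 - 1 / s\<^sup>2) * \<rho>\<^sup>2 / 2))"
    by (rule nn_integral_normal_density_truncated_second_moment_le[OF sigma_pos s rho(1)])
  show "(\<integral>\<^sup>+x. ennreal (\<mu> x * (x\<^sup>2 * indicator {x. \<rho> < \<bar>x\<bar>} x)) \<partial>lborel)
    \<le> ennreal (2 * (LINT x:{\<rho>\<^sub>0..}|lborel. x\<^sup>2 * \<mu> x))"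
    by (rule nn_integral_symmetric_truncated_second_moment_le[OF mu_measurable mu_nonneg
          mu_symmetric mu2 rho(2)])
qed (use sigma_pos s in simp_all)

lemma expectation_truncated_second_moment_rate:
  assumes r: "0 < r" and mu2: "integrable lborel (\<lambda>x. x\<^sup>2 * \<mu> x)" and n: "exp 1 \<le> real n"
    and tail: "(LINT x:{rho0 n..}|lborel. x\<^sup>2 * \<mu> x) = real n powr (- (2 * r / (2 * r + 1)))"
  shows "expectation (\<lambda>\<omega>. (eps j k \<omega>)\<^sup>2 * indicator {x. rho_thr rho0 \<sigma> r n < \<bar>x\<bar>} (eps j k \<omega>))
    \<le> ((\<sigma> * sqrt (2 * r + 1)) ^ 3 / \<sigma> + 2) * real n powr ((1 - 2 * r) / (2 * r + 1))"
    (is "_ \<le> (?s ^ 3 / \<sigma> + 2) * ?P")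
proof -
  define \<rho> where "\<rho> = rho_thr rho0 \<sigma> r n"
  have "\<sigma> < ?s"
    using sigma_pos r by simp
  have "0 \<le> ?s ^ 3 / \<sigma>"
    using sigma_pos r by simp
  have "0 \<le> \<rho>" "rho0 n \<le> \<rho>"
    using rho_thr_lower_bound(1)[OF r sigma_pos n] by (simp_all add: \<rho>_def rho_thr_def)
  have "?s\<^sup>2 = \<sigma>\<^sup>2 * (2 * r + 1)"
    using r by (simp add: power_mult_distrib)
  then have exponent: "- (1 / \<sigma>\<^sup>2 - 1 / ?s\<^sup>2) * \<rho>\<^sup>2 / 2 = - (r / (2 * r + 1)) * (\<rho> / \<sigma>)\<^sup>2"
    using sigma_pos r by (simp only:) (simp add: power_divide divide_simps)
  have gauss: "exp (- (1 / \<sigma>\<^sup>2 - 1 / ?s\<^sup>2) * \<rho>\<^sup>2 / 2) \<le> ?P"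
    unfolding exponent unfolding \<rho>_def by (rule exp_rho_thr_le[OF r sigma_pos n])
  have "1 \<le> real n"
    using n one_le_exp_iff[of 1] by linarith
  then have "real n powr (- (2 * r / (2 * r + 1))) \<le> ?P"
    using r by (intro powr_mono) (simp_all add: divide_simps)
  then have tail_le: "(LINT x:{rho0 n..}|lborel. x\<^sup>2 * \<mu> x) \<le> ?P"
    using tail by simp
  have "expectation (\<lambda>\<omega>. (eps j k \<omega>)\<^sup>2 * indicator {x. \<rho> < \<bar>x\<bar>} (eps j k \<omega>))
      \<le> (1 - lam j) * (?s ^ 3 / \<sigma> * exp (- (1 / \<sigma>\<^sup>2 - 1 / ?s\<^sup>2) * \<rho>\<^sup>2 / 2))
        + lam j * (2 * (LINT x:{rho0 n..}|lborel. x\<^sup>2 * \<mu> x))"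
    by (rule expectation_truncated_second_moment_le[OF mu2 \<open>\<sigma> < ?s\<close> \<open>0 \<le> \<rho>\<close> \<open>rho0 n \<le> \<rho>\<close>])
  also have "\<dots> \<le> (1 - lam j) * (?s ^ 3 / \<sigma> * ?P) + lam j * (2 * ?P)"
    using gauss tail_le \<open>0 \<le> ?s ^ 3 / \<sigma>\<close> lam_nonneg[of j] lam_le_1[of j]
    by (intro add_mono mult_left_mono) simp_all
  also have "\<dots> \<le> ?s ^ 3 / \<sigma> * ?P + 2 * ?P"
    using mult_nonneg_nonneg[OF \<open>0 \<le> ?s ^ 3 / \<sigma>\<close>, of ?P] lam_nonneg[of j] lam_le_1[of j]
    by (intro add_mono mult_left_le_one_le) simp_all
  finally show ?thesis
    by (simp add: \<rho>_def distrib_right)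
qed

lemma scaled_truncated_second_moment_le:
  assumes r: "0 < r" and mu2: "integrable lborel (\<lambda>x. x\<^sup>2 * \<mu> x)" and n: "exp 1 \<le> real n"
    and tail: "(LINT x:{rho0 n..}|lborel. x\<^sup>2 * \<mu> x) = real n powr (- (2 * r / (2 * r + 1)))"
  shows "expectation (\<lambda>\<omega>. (eps j k \<omega> / sqrt (real n))\<^sup>2 *
      (if sqrt (real n) * \<bar>eps j k \<omega> / sqrt (real n)\<bar> > rho_thr rho0 \<sigma> r n then 1 else 0))
    \<le> ((\<sigma> * sqrt (2 * r + 1)) ^ 3 / \<sigma> + 2) * real n powr (- (4 * r / (2 * r + 1)))"
proof -
  have "0 < real n"
    using n exp_gt_zero[of 1] by linarith
  have "(1 - 2 * r) / (2 * r + 1) = 1 - 4 * r / (2 * r + 1)"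
    using r by (simp add: field_simps)
  then have rate: "real n powr ((1 - 2 * r) / (2 * r + 1)) / real n = real n powr (- (4 * r / (2 * r + 1)))"
    using \<open>0 < real n\<close> by (simp add: powr_diff powr_minus divide_inverse)
  have "expectation (\<lambda>\<omega>. (eps j k \<omega> / sqrt (real n))\<^sup>2 *
      (if sqrt (real n) * \<bar>eps j k \<omega> / sqrt (real n)\<bar> > rho_thr rho0 \<sigma> r n then 1 else 0))
    = expectation (\<lambda>\<omega>. (eps j k \<omega>)\<^sup>2 * indicator {x. rho_thr rho0 \<sigma> r n < \<bar>x\<bar>} (eps j k \<omega>)) / real n"
    using \<open>0 < real n\<close> by (simp add: power_divide abs_divide indicator_def of_bool_def)
  also have "\<dots> \<le> ((\<sigma> * sqrt (2 * r + 1)) ^ 3 / \<sigma> + 2) * real n powr ((1 - 2 * r) / (2 * r + 1)) / real n"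
    using \<open>0 < real n\<close>
    by (intro divide_right_mono expectation_truncated_second_moment_rate[where ?rho0.0 = rho0,
          OF r mu2 n tail]) simp
  also have "\<dots> = ((\<sigma> * sqrt (2 * r + 1)) ^ 3 / \<sigma> + 2) * real n powr (- (4 * r / (2 * r + 1)))"
    by (simp only: times_divide_eq_right[symmetric] rate)
  finally show ?thesis .
qed

lemma scaled_truncated_second_moment_bound:
  assumes r: "0 < r" and mu2: "integrable lborel (\<lambda>x. x\<^sup>2 * \<mu> x)"
    and rho0: "\<forall>\<^sub>F n in sequentially.
      (LINT x:{rho0 n..}|lborel. x\<^sup>2 * \<mu> x) = real n powr (- (2 * r / (2 * r + 1)))"
  shows "\<exists>C. \<forall>\<^sub>F n in sequentially. \<forall>j k.
    expectation (\<lambda>\<omega>. (eps j k \<omega> / sqrt (real n))\<^sup>2 *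
      (if sqrt (real n) * \<bar>eps j k \<omega> / sqrt (real n)\<bar> > rho_thr rho0 \<sigma> r n then 1 else 0))
    \<le> C * real n powr (- (4 * r / (2 * r + 1)))"
proof -
  have large_n: "\<forall>\<^sub>F n in sequentially. exp 1 \<le> real n"
    using filterlim_real_sequentially by (simp add: filterlim_at_top)
  show ?thesis
    by (intro exI eventually_mono[OF eventually_conj[OF large_n rho0]] allI)
       (elim conjE, rule scaled_truncated_second_moment_le[OF r mu2], assumption+)
qed

end

theorem lemma3:
  fixes M :: "'a measure"
    and \<sigma> r :: real and \<mu> :: "real \<Rightarrow> real" and lam :: "nat \<Rightarrow> real" and J0 :: nat
    and eps :: "nat \<Rightarrow> nat \<Rightarrow> 'a \<Rightarrow> real"
    and d :: "nat \<Rightarrow> nat \<Rightarrow> nat \<Rightarrow> 'a \<Rightarrow> real" and \<theta> :: "nat \<Rightarrow> nat \<Rightarrow> nat \<Rightarrow> real"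
    and rho0 :: "nat \<Rightarrow> real"
  assumes M: "prob_space M"
    and r: "r > 0" and sigma: "\<sigma> > 0"
    and mu_meas: "\<mu> \<in> borel_measurable borel"
    and mu_nonneg: "\<And>x. \<mu> x \<ge> 0"
    and mu_int: "integrable lborel \<mu>" and mu_one: "(\<integral>x. \<mu> x \<partial>lborel) = 1"
    and mu_sym: "\<And>x. \<mu> (- x) = \<mu> x"
    and mu_var: "integrable lborel (\<lambda>x. x\<^sup>2 * \<mu> x)" "(\<integral>x. x\<^sup>2 * \<mu> x \<partial>lborel) = \<sigma>\<^sup>2"
    and mu_4th: "integrable lborel (\<lambda>x. x ^ 4 * \<mu> x)"
    and lam: "\<And>j. 0 \<le> lam j \<and> lam j \<le> 1"
    and lam0: "\<And>j. j \<le> J0 \<Longrightarrow> lam j = 0"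
    and eps_distr: "\<And>j k. distributed M lborel (eps j k) (\<lambda>x. ennreal (mix_density \<sigma> \<mu> (lam j) x))"
    and d_def: "\<And>n j k \<omega>. \<omega> \<in> space M \<Longrightarrow> d n j k \<omega> - \<theta> n j k = eps j k \<omega> / sqrt (real n)"
    and rho0: "\<forall>\<^sub>F n in sequentially. rho0 n > 0 \<and>
                 (LINT x:{rho0 n..}|lborel. x\<^sup>2 * \<mu> x) = real n powr (- (2 * r / (2 * r + 1)))"
  shows
    "(\<forall>i\<in>{1::nat, 2}. \<exists>C. \<forall>\<^sub>F n in sequentially. \<forall>j k.
        prob_space.expectation M (\<lambda>\<omega>. (d n j k \<omega> - \<theta> n j k) ^ (2 * i))
          \<le> C * real n powr (- real i))
     \<and> (\<forall>a > 0. \<forall>e > 0. \<forall>\<^sub>F n in sequentially. \<forall>j k. j < J0 \<longrightarrow>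
        prob_space.prob M {\<omega> \<in> space M. sqrt (real n) * \<bar>d n j k \<omega> - \<theta> n j k\<bar> > a * sqrt (ln (real n))}
          \<le> e * real n powr (- (a\<^sup>2 / (2 * \<sigma>\<^sup>2))))
     \<and> (\<exists>C. \<forall>\<^sub>F n in sequentially. \<forall>j k.
        prob_space.expectation M (\<lambda>\<omega>. (d n j k \<omega> - \<theta> n j k)\<^sup>2 *
            (if sqrt (real n) * \<bar>d n j k \<omega> - \<theta> n j k\<bar> > rho_thr rho0 \<sigma> r n then 1 else 0))
          \<le> C * real n powr (- (4 * r / (2 * r + 1))))"
proof -
  interpret noise: normal_mixture_noise M \<sigma> \<mu> lam eps
    by (intro normal_mixture_noise.intro normal_mixture_noise_axioms.intro M sigma mu_meas
        mu_nonneg mu_sym eps_distr) (simp_all add: lam)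
  have "integrable lborel (\<lambda>x. x ^ (2 * 1) * \<mu> x)" "integrable lborel (\<lambda>x. x ^ (2 * 2) * \<mu> x)"
    using mu_var(1) mu_4th by (simp_all add: power2_eq_square)
  note moments = this[THEN noise.scaled_even_moment_bound]
  note tails = noise.scaled_tail_prob_bound[where P = "\<lambda>j. j < J0"]
  note truncated = noise.scaled_truncated_second_moment_bound[OF r mu_var(1)
      eventually_mono[OF rho0 conjunct2]]
  show ?thesis
    using moments tails truncated lam0
    by (simp add: d_def cong: Bochner_Integration.integral_cong conj_cong)
qed

end
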